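(* Let $n\ge 2$ be even, let $0 < l_1 < l_2 < \cdots < l_t$ be integers, and let $\tau = (1,2,\dots,l_1)(l_1+1,\dots,l_2)\cdots(l_{t-1}+1,\dots,l_t) \in S_{l_t+3n-3}$. Then for every sequence of integers $1 \le a_1 < a_2 < \cdots < a_{l_t} \le l_t+3n-3$, the permutation $(a_1,\dots,a_{l_1})(a_{l_1+1},\dots,a_{l_2})\cdots(a_{l_{t-1}+1},\dots,a_{l_t})$ can be obtained from $\tau$ by successive conjugation by $n$-crossing permutations over $S_{l_t+3n-3}$; that is, it equals $g\tau g^{-1}$ for some $g$ that is a product of $n$-crossing permutations over $S_{l_t+3n-3}$.
   Context: For integers $2\le n\le m$ and $1 \le j \le m-n+1$, the $n$-crossing permutation $\pi_j\in S_m$ is $\pi_j=(j,\,j+n-1)(j+1,\,j+n-2)\cdots$, i.e. the involution sending $i \mapsto 2j+n-1-i$ for $j\le i\le j+n-1$ and fixing all other elements of $\{1,\dots,m\}$. The $n$-crossing permutations over $S_m$ are $\pi_1,\dots,\pi_{m-n+1}$. *)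

theory Defs
  imports Main
begin

text \<open>Permutations of {1..m} are modelled as functions nat \<Rightarrow> nat fixing everything
outside {1..m}.\<close>
definition crossing :: "nat \<Rightarrow> nat \<Rightarrow> nat \<Rightarrow> nat" where
  "crossing n j i = (if j \<le> i \<and> i \<le> j + n - 1 then 2 * j + n - 1 - i else i)"

text \<open>Block boundaries 0 = l_0 < l_1 < ... < l_t (indices 1..t of l).\<close>
definition cyc_next :: "(nat \<Rightarrow> nat) \<Rightarrow> nat \<Rightarrow> nat \<Rightarrow> nat" where
  "cyc_next l t k =
     (if k \<in> l ` {1..t}
      then (let i = (THE i. i \<in> {1..t} \<and> l i = k) in if i = 1 then 1 else l (i - 1) + 1)
      else Suc k)"

definition cycles_perm :: "(nat \<Rightarrow> nat) \<Rightarrow> nat \<Rightarrow> (nat \<Rightarrow> nat) \<Rightarrow> nat \<Rightarrow> nat" where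
  "cycles_perm l t a x =
     (if \<exists>k\<in>{1..l t}. a k = x
      then a (cyc_next l t (THE k. k \<in> {1..l t} \<and> a k = x))
      else x)"

end

theory Submission
  imports Defs "HOL-Combinatorics.Cycles"
begin

(*
  The n-crossing permutations are involutions, so the words in them form a group G of permutations
  of {1..M}, M = l_t + 3n - 3.  For even n, G contains every 3-cycle (i, i+1, i+2): for n = 2 as a
  product of two adjacent transpositions; for n >= 4 the product pi_1 pi_2 pi_3 pi_2 is the 3-cycle
  (1, n, n+2), a conjugate of which is (1 2 3), and conjugating a consecutive 3-cycle inside the
  window of pi_k by pi_k reflects it to another consecutive 3-cycle, which carries (1 2 3) to every
  position.  Conjugating (x y z) by (z w u) gives (x y w), so consecutive 3-cycles generate all
  3-cycles on {1..M}.  As M exceeds l_t by at least 3, these suffice to build, one point at a time,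
  some g in G with g k = a_k for all k <= l_t; conjugation by g turns tau into the required product.
*)

inductive_set compositions :: "('a \<Rightarrow> 'a) set \<Rightarrow> ('a \<Rightarrow> 'a) set" for S where
  id: "id \<in> compositions S"
| comp: "f \<in> S \<Longrightarrow> g \<in> compositions S \<Longrightarrow> f \<circ> g \<in> compositions S"

lemma in_compositionsI: "f \<in> S \<Longrightarrow> f \<in> compositions S"
  using compositions.comp[OF _ compositions.id] by simp

lemma compositions_comp:
  assumes "g \<in> compositions S" and "h \<in> compositions S"
  shows "g \<circ> h \<in> compositions S"
  using assms
  by (induction rule: compositions.induct) (auto simp: comp_assoc intro: compositions.intros)

lemma compositions_eq_foldr:
  "compositions S = {foldr (\<circ>) fs id | fs. set fs \<subseteq> S}"
proof (intro equalityI subsetI)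
  fix g
  assume "g \<in> compositions S"
  then show "g \<in> {foldr (\<circ>) fs id | fs. set fs \<subseteq> S}"
  proof (rule compositions.induct)
    show "id \<in> {foldr (\<circ>) fs id | fs. set fs \<subseteq> S}"
      by (auto intro!: exI[of _ "[]"])
  next
    fix f g
    assume "f \<in> S" and "g \<in> {foldr (\<circ>) fs id | fs. set fs \<subseteq> S}"
    then obtain fs where "set (f # fs) \<subseteq> S" and "f \<circ> g = foldr (\<circ>) (f # fs) id"
      by auto
    then show "f \<circ> g \<in> {foldr (\<circ>) fs id | fs. set fs \<subseteq> S}"
      by blast
  qed
next
  fix g
  assume "g \<in> {foldr (\<circ>) fs id | fs. set fs \<subseteq> S}"
  then obtain fs where "set fs \<subseteq> S" and "g = foldr (\<circ>) fs id"
    by blast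
  then show "g \<in> compositions S"
    by (induction fs arbitrary: g) (auto intro: compositions.intros)
qed

locale involutions =
  fixes S :: "('a \<Rightarrow> 'a) set"
  assumes involutive: "f \<in> S \<Longrightarrow> f \<circ> f = id"
begin

lemma compositions_inverse:
  assumes "g \<in> compositions S"
  shows "bij g \<and> inv g \<in> compositions S"
  using assms
proof (rule compositions.induct)
  show "bij id \<and> inv id \<in> compositions S"
    by (simp add: compositions.id)
next
  fix f g
  assume f: "f \<in> S" and g: "bij g \<and> inv g \<in> compositions S"
  have "bij f" and "inv f = f"
    using involutive[OF f] by (auto simp: o_bij inv_unique_comp)
  with f g show "bij (f \<circ> g) \<and> inv (f \<circ> g) \<in> compositions S"
    by (simp add: bij_comp o_inv_distrib compositions_comp in_compositionsI)
qed

definition three_cycle :: "'a \<Rightarrow> 'a \<Rightarrow> 'a \<Rightarrow> bool" where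
  "three_cycle x y z \<longleftrightarrow> distinct [x, y, z] \<and> cycle_of_list [x, y, z] \<in> compositions S"

lemma three_cycle_conjugate:
  assumes "g \<in> compositions S" and "three_cycle x y z"
  shows "three_cycle (g x) (g y) (g z)"
proof -
  have "bij g" and "inv g \<in> compositions S"
    using compositions_inverse[OF assms(1)] by auto
  have "distinct [x, y, z]" and "cycle_of_list [x, y, z] \<in> compositions S"
    using assms(2) unfolding three_cycle_def by auto
  then have "g \<circ> cycle_of_list [x, y, z] \<circ> inv g \<in> compositions S"
    using assms(1) \<open>inv g \<in> compositions S\<close> by (intro compositions_comp)
  then have "cycle_of_list [g x, g y, g z] \<in> compositions S"
    using conjugation_of_cycle[OF \<open>distinct [x, y, z]\<close> \<open>bij g\<close>] by simp
  moreover have "distinct [g x, g y, g z]"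
    using \<open>distinct [x, y, z]\<close> \<open>bij g\<close> by (simp add: bij_is_inj inj_eq)
  ultimately show ?thesis
    unfolding three_cycle_def by blast
qed

lemma three_cycle_rotate:
  assumes "three_cycle x y z"
  shows "three_cycle y z x"
proof -
  have "cycle_of_list [y, z, x] = cycle_of_list [x, y, z]"
    using assms unfolding three_cycle_def by (auto simp: fun_eq_iff transpose_def)
  then show ?thesis
    using assms unfolding three_cycle_def by auto
qed

lemma three_cycle_swap:
  assumes "three_cycle x y z"
  shows "three_cycle x z y"
proof -
  have "cycle_of_list [x, z, y] = cycle_of_list [x, y, z] \<circ> cycle_of_list [x, y, z]"
    using assms unfolding three_cycle_def by (auto simp: fun_eq_iff transpose_def)
  then show ?thesis
    using assms unfolding three_cycle_def by (auto simp: compositions_comp)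
qed

lemma three_cycle_reverse: "three_cycle x y z \<Longrightarrow> three_cycle z y x"
  by (rule three_cycle_rotate[OF three_cycle_swap])

lemma three_cycle_replace:
  assumes "three_cycle x y z" and "three_cycle z w u" and "w \<notin> {x, y}" and "u \<notin> {x, y}"
  shows "three_cycle x y w"
proof -
  let ?c = "cycle_of_list [z, w, u]"
  have "?c \<in> compositions S" and "distinct [z, w, u]"
    using assms(2) unfolding three_cycle_def by auto
  moreover have "x \<noteq> z" and "y \<noteq> z"
    using assms(1) unfolding three_cycle_def by auto
  ultimately have "?c x = x" and "?c y = y" and "?c z = w"
    using assms(3,4) by (auto simp: transpose_def)
  then show ?thesis
    using three_cycle_conjugate[OF \<open>?c \<in> compositions S\<close> assms(1)] by simp
qed

end

lemma exists_in_interval_notin: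
  assumes "finite B" and "card B < M"
  shows "\<exists>z\<in>{1..M}. z \<notin> B"
  using card_mono[OF assms(1), of "{1..M}"] assms(2) by force

locale interval_involutions = involutions S for S :: "(nat \<Rightarrow> nat) set" +
  fixes M :: nat
  assumes permutes_interval: "f \<in> S \<Longrightarrow> f permutes {1..M}"
begin

context
  assumes five_le: "5 \<le> M"
    and consecutive: "\<And>i. 1 \<le> i \<Longrightarrow> i + 2 \<le> M \<Longrightarrow> three_cycle i (i + 1) (i + 2)"
begin

lemma three_cycle_consecutive:
  "1 \<le> i \<Longrightarrow> k \<le> M \<Longrightarrow> j = i + 1 \<Longrightarrow> k = i + 2 \<Longrightarrow> three_cycle i j k"
  using consecutive by blast

lemma three_cycle_offsets_0_1_3:
  assumes "1 \<le> i" and "i + 3 \<le> M"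
  shows "three_cycle i (i + 1) (i + 3)"
proof -
  have away_from_end: "three_cycle j (j + 1) (j + 3)" if "1 \<le> j" and "j + 4 \<le> M" for j
  proof -
    have "three_cycle j (j + 1) (j + 2)" and "three_cycle (j + 2) (j + 3) (j + 4)"
      by (rule three_cycle_consecutive; use that in simp)+
    then show ?thesis
      by (rule three_cycle_replace) auto
  qed
  show ?thesis
  proof (cases "i + 4 \<le> M")
    case True
    then show ?thesis
      using away_from_end assms by simp
  next
    case False
    then have "2 \<le> i"
      using assms five_le by simp
    have c1: "three_cycle (i + 1) (i + 2) (i + 3)"
      by (rule three_cycle_consecutive) (use assms in simp_all)
    have c2: "three_cycle (i - 1) i (i + 2)"
      using away_from_end[of "i - 1"] assms \<open>2 \<le> i\<close> by simp
    have "three_cycle (i + 3) (i + 1) i"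
      by (rule three_cycle_replace[OF three_cycle_rotate[OF three_cycle_rotate[OF c1]]
            three_cycle_reverse[OF c2]])
        (use \<open>2 \<le> i\<close> in auto)
    then show ?thesis
      by (rule three_cycle_reverse)
  qed
qed

lemma three_cycle_offsets_0_2_3:
  assumes "1 \<le> i" and "i + 3 \<le> M"
  shows "three_cycle i (i + 2) (i + 3)"
proof -
  have away_from_start: "three_cycle j (j + 2) (j + 3)" if "2 \<le> j" and "j + 3 \<le> M" for j
  proof -
    have c1: "three_cycle (j + 1) (j + 2) (j + 3)" and c2: "three_cycle (j - 1) j (j + 1)"
      by (rule three_cycle_consecutive; use that in simp)+
    have "three_cycle (j + 2) (j + 3) j"
      by (rule three_cycle_replace[OF three_cycle_rotate[OF c1] three_cycle_reverse[OF c2]])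
        (use that in auto)
    then show ?thesis
      by (rule three_cycle_rotate[OF three_cycle_rotate])
  qed
  show ?thesis
  proof (cases "i = 1")
    case True
    have "three_cycle 1 2 3"
      by (rule three_cycle_consecutive) (use five_le in simp_all)
    then have "three_cycle 1 3 2"
      by (rule three_cycle_swap)
    moreover have "three_cycle 2 4 5"
      using away_from_start[of 2] five_le by simp
    ultimately have "three_cycle 1 3 4"
      by (rule three_cycle_replace) auto
    then show ?thesis
      unfolding True by (simp add: eval_nat_numeral)
  next
    case False
    then show ?thesis
      using away_from_start assms by simp
  qed
qed

lemma three_cycle_narrow:
  assumes "1 \<le> x" and "x < y" and "y < z" and "z \<le> x + 3" and "z \<le> M"
  shows "three_cycle x y z"
proof -
  consider "y = x + 1" "z = x + 2" | "y = x + 1" "z = x + 3" | "y = x + 2" "z = x + 3"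
    using assms(2-4) by arith
  then show ?thesis
  proof cases
    case 1
    show ?thesis
      by (rule three_cycle_consecutive) (use 1 assms in simp_all)
  next
    case 2
    then show ?thesis
      using three_cycle_offsets_0_1_3[of x] assms by (simp only:)
  next
    case 3
    then show ?thesis
      using three_cycle_offsets_0_2_3[of x] assms by (simp only:)
  qed
qed

lemma three_cycle_raise_last:
  assumes "three_cycle x y (z - 1)" and "y < z - 1" and "x + 3 < z" and "z \<le> M"
  shows "three_cycle x y z"
proof (cases "y = z - 2")
  case False
  have "three_cycle (z - 2) (z - 1) z"
    by (rule three_cycle_consecutive) (use assms in auto)
  then show ?thesis
    by (rule three_cycle_replace[OF assms(1) three_cycle_rotate]) (use assms False in auto)
next
  case True
  have "three_cycle (z - 3) (z - 3 + 2) (z - 3 + 3)"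
    by (rule three_cycle_offsets_0_2_3) (use assms in auto)
  moreover have "z - 3 + 2 = z - 1" and "z - 3 + 3 = z"
    using assms(3) by auto
  ultimately have "three_cycle (z - 3) (z - 1) z"
    by (simp only:)
  then show ?thesis
    by (rule three_cycle_replace[OF assms(1) three_cycle_rotate]) (use assms True in auto)
qed

lemma three_cycle_raise_middle:
  assumes "three_cycle x (y - 1) (y + 1)" and "1 \<le> x" and "x + 2 < y" and "y + 1 \<le> M"
  shows "three_cycle x y (y + 1)"
proof -
  have "three_cycle (y - 2) (y - 1) y"
    by (rule three_cycle_consecutive) (use assms in auto)
  then have "three_cycle x (y + 1) y"
    by (rule three_cycle_replace[OF three_cycle_swap[OF assms(1)] three_cycle_rotate])
      (use assms in auto)
  then show ?thesis
    by (rule three_cycle_swap)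
qed

lemma three_cycle_ascending:
  assumes "1 \<le> x" and "x < y" and "y < z" and "z \<le> M"
  shows "three_cycle x y z"
  using assms
proof (induction "y + z" arbitrary: y z rule: less_induct)
  case less
  consider "z \<le> x + 3" | "x + 3 < z" "y < z - 1" | "x + 3 < z" "z = y + 1"
    using less.prems by linarith
  then show ?case
  proof cases
    case 1
    show ?thesis
      by (rule three_cycle_narrow) (use less.prems 1 in simp_all)
  next
    case 2
    have "three_cycle x y (z - 1)"
      by (rule less.hyps) (use less.prems 2 in auto)
    then show ?thesis
      by (rule three_cycle_raise_last) (use less.prems 2 in auto)
  next
    case 3
    have "three_cycle x (y - 1) (y + 1)"
      by (rule less.hyps) (use less.prems 3 in auto)
    then show ?thesis
      unfolding \<open>z = y + 1\<close> by (rule three_cycle_raise_middle) (use less.prems 3 in auto)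
  qed
qed

lemma three_cycle_in_interval:
  assumes "distinct [x, y, z]" and "{x, y, z} \<subseteq> {1..M}"
  shows "three_cycle x y z"
proof -
  have ascending: "three_cycle a b c" if "a < b" "b < c" "{a, b, c} \<subseteq> {1..M}" for a b c
    using three_cycle_ascending that by auto
  consider "x < y" "y < z" | "x < z" "z < y" | "y < x" "x < z" | "y < z" "z < x"
    | "z < x" "x < y" | "z < y" "y < x"
    using assms(1) by (simp, arith)
  then show ?thesis
  proof cases
    case 1
    then show ?thesis by (rule ascending) (use assms(2) in auto)
  next
    case 2
    then show ?thesis by (rule three_cycle_swap[OF ascending]) (use assms(2) in auto)
  next
    case 3
    then show ?thesis
      by (rule three_cycle_swap[OF three_cycle_rotate[OF ascending]]) (use assms(2) in auto)
  next
    case 4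
    then show ?thesis
      by (rule three_cycle_rotate[OF three_cycle_rotate[OF ascending]]) (use assms(2) in auto)
  next
    case 5
    then show ?thesis by (rule three_cycle_rotate[OF ascending]) (use assms(2) in auto)
  next
    case 6
    then show ?thesis by (rule three_cycle_reverse[OF ascending]) (use assms(2) in auto)
  qed
qed

end

lemma compositions_permute:
  assumes "g \<in> compositions S"
  shows "g permutes {1..M}"
  using assms
proof (rule compositions.induct)
  show "id permutes {1..M}"
    by (rule permutes_id)
next
  fix f g
  assume "f \<in> S" and "g permutes {1..M}"
  then show "f \<circ> g permutes {1..M}"
    using permutes_interval by (blast intro: permutes_compose)
qed

lemma composition_extend_step:
  assumes three_cycles: "\<And>x y z. distinct [x, y, z] \<Longrightarrow> {x, y, z} \<subseteq> {1..M} \<Longrightarrow> three_cycle x y z"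
    and g: "g \<in> compositions S" and agree: "\<forall>k\<in>K. g k = a k"
    and "finite K" and room: "card K + 3 \<le> M"
    and p: "p \<in> {1..M}" "p \<notin> K" and ap: "a p \<in> {1..M}" "a p \<notin> a ` K"
  shows "\<exists>g'\<in>compositions S. \<forall>k\<in>insert p K. g' k = a k"
proof (cases "g p = a p")
  case True
  with g agree show ?thesis
    by (intro bexI[of _ g]) auto
next
  case False
  have "g permutes {1..M}"
    by (rule compositions_permute[OF g])
  then have "g p \<in> {1..M}"
    using permutes_in_image[of g "{1..M}" p] p(1) by blast
  let ?B = "a ` K \<union> {g p, a p}"
  have "card {g p, a p} \<le> 2"
    by (simp add: card_insert_if)
  then have "card ?B < M"
    using card_Un_le[of "a ` K" "{g p, a p}"] card_image_le[OF \<open>finite K\<close>, of a] room by simp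
  then obtain z where z: "z \<in> {1..M}" "z \<notin> ?B"
    using exists_in_interval_notin[of ?B M] \<open>finite K\<close> by blast
  let ?c = "cycle_of_list [g p, a p, z]"
  have "three_cycle (g p) (a p) z"
    using three_cycles False z \<open>g p \<in> {1..M}\<close> ap(1) by auto
  then have "?c \<circ> g \<in> compositions S"
    using g compositions_comp unfolding three_cycle_def by blast
  moreover have "(?c \<circ> g) k = a k" if "k \<in> insert p K" for k
  proof (cases "k = p")
    case True
    then show ?thesis
      using \<open>three_cycle (g p) (a p) z\<close> by (simp add: three_cycle_def transpose_def)
  next
    case False
    then have "k \<in> K"
      using that by simp
    have "g k = a k"
      using agree \<open>k \<in> K\<close> by blast
    moreover have "a k \<notin> {a p, z}"
      using ap(2) z(2) \<open>k \<in> K\<close> by (metis imageI insert_iff singletonD UnI1)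
    moreover have "g k \<noteq> g p"
      using permutes_inj[OF \<open>g permutes {1..M}\<close>] False by (simp add: inj_eq)
    ultimately show ?thesis
      by (simp add: id_outside_supp)
  qed
  ultimately show ?thesis
    by blast
qed

lemma exists_composition_extending:
  assumes three_cycles: "\<And>x y z. distinct [x, y, z] \<Longrightarrow> {x, y, z} \<subseteq> {1..M} \<Longrightarrow> three_cycle x y z"
    and inj: "inj_on a {1..L}" and range: "a ` {1..L} \<subseteq> {1..M}" and room: "L + 2 \<le> M"
  shows "\<exists>g\<in>compositions S. \<forall>k\<in>{1..L}. g k = a k"
proof -
  have "\<exists>g\<in>compositions S. \<forall>k\<in>{1..L'}. g k = a k" if "L' \<le> L" for L'
    using that
  proof (induction L')
    case 0
    then show ?case
      using compositions.id by auto
  next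
    case (Suc L')
    then obtain g where g: "g \<in> compositions S" and agree: "\<forall>k\<in>{1..L'}. g k = a k"
      by auto
    have "a (Suc L') \<notin> a ` {1..L'}"
      using inj Suc.prems by (auto simp: inj_on_eq_iff)
    moreover have "a (Suc L') \<in> {1..M}"
      using range Suc.prems by (auto simp: image_subset_iff)
    ultimately have "\<exists>g'\<in>compositions S. \<forall>k\<in>insert (Suc L') {1..L'}. g' k = a k"
      by (intro composition_extend_step[OF three_cycles g agree]) (use Suc.prems room in auto)
    then show ?case
      by (simp add: atLeastAtMostSuc_conv)
  qed
  then show ?thesis
    by blast
qed

end

lemma iff_Suc_imp_iff_on_interval:
  fixes P :: "nat \<Rightarrow> bool"
  assumes step: "\<And>i. lo \<le> i \<Longrightarrow> i < hi \<Longrightarrow> P i \<longleftrightarrow> P (Suc i)"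
    and "lo \<le> i" and "i \<le> hi" and "lo \<le> j" and "j \<le> hi"
  shows "P i \<longleftrightarrow> P j"
proof -
  have "P k \<longleftrightarrow> P lo" if "lo \<le> k" and "k \<le> hi" for k
    using that by (induction k rule: dec_induct) (use step in auto)
  then show ?thesis
    using assms(2-5) by blast
qed

definition crossings :: "nat \<Rightarrow> nat \<Rightarrow> (nat \<Rightarrow> nat) set" where
  "crossings n M = crossing n ` {1..M - n + 1}"

lemma crossing_involutive: "crossing n j \<circ> crossing n j = id"
  unfolding crossing_def by (auto simp: fun_eq_iff)

lemma crossing_permutes:
  assumes "1 \<le> j" and "j + n - 1 \<le> M"
  shows "crossing n j permutes {1..M}"
proof -
  have "bij (crossing n j)"
    by (rule o_bij[OF crossing_involutive crossing_involutive])
  moreover have "crossing n j x = x" if "x \<notin> {1..M}" for x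
    using assms that by (auto simp: crossing_def)
  ultimately show ?thesis
    unfolding permutes_def bij_iff by blast
qed

lemma involutions_crossings: "involutions (crossings n M)"
  by unfold_locales (auto simp: crossings_def crossing_involutive)

context
  fixes n M :: nat
  assumes n_le_M: "n \<le> M"
begin

interpretation crossing_group: interval_involutions "crossings n M" M
proof (rule interval_involutions.intro[OF involutions_crossings], unfold_locales)
  fix f
  assume "f \<in> crossings n M"
  then obtain j where "f = crossing n j" and "1 \<le> j" and "j + n - 1 \<le> M"
    using n_le_M unfolding crossings_def by auto
  then show "f permutes {1..M}"
    using crossing_permutes by simp
qed

lemma crossing_in_compositions:
  "1 \<le> k \<Longrightarrow> k + n - 1 \<le> M \<Longrightarrow> crossing n k \<in> compositions (crossings n M)"
  by (rule in_compositionsI) (auto simp: crossings_def)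

lemma reflect_consecutive_three_cycle:
  assumes "crossing_group.three_cycle i (i + 1) (i + 2)"
    and "1 \<le> k" and "k + n - 1 \<le> M" and "k \<le> i" and "i + 2 \<le> k + n - 1"
    and "i + j + 3 = 2 * k + n"
  shows "crossing_group.three_cycle j (j + 1) (j + 2)"
proof -
  have "crossing_group.three_cycle (crossing n k i) (crossing n k (i + 1)) (crossing n k (i + 2))"
    using crossing_group.three_cycle_conjugate[OF crossing_in_compositions assms(1)] assms(2,3) .
  moreover have "crossing n k i = j + 2" and "crossing n k (i + 1) = j + 1"
    and "crossing n k (i + 2) = j"
    using assms(2-6) by (auto simp: crossing_def)
  ultimately show ?thesis
    using crossing_group.three_cycle_reverse by metis
qed

lemma consecutive_three_cycle_adjacent_transpositions:
  assumes "n = 2" and "1 \<le> i" and "i + 2 \<le> M"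
  shows "crossing_group.three_cycle i (i + 1) (i + 2)"
proof -
  have "cycle_of_list [i, i + 1, i + 2] = crossing n i \<circ> crossing n (i + 1)"
    using assms(1) by (auto simp: fun_eq_iff crossing_def transpose_def)
  moreover have "crossing n i \<circ> crossing n (i + 1) \<in> compositions (crossings n M)"
    using assms by (intro compositions_comp crossing_in_compositions) auto
  ultimately show ?thesis
    unfolding crossing_group.three_cycle_def by simp
qed

lemma three_cycle_1_n_n_plus_2:
  assumes "2 \<le> n" and "n + 2 \<le> M"
  shows "crossing_group.three_cycle 1 n (n + 2)"
proof -
  have "cycle_of_list [1, n, n + 2] = crossing n 1 \<circ> crossing n 2 \<circ> crossing n 3 \<circ> crossing n 2"
    using assms(1) by (auto simp: fun_eq_iff crossing_def transpose_def)
  moreover have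
    "crossing n 1 \<circ> crossing n 2 \<circ> crossing n 3 \<circ> crossing n 2 \<in> compositions (crossings n M)"
    using assms by (intro compositions_comp crossing_in_compositions) auto
  ultimately show ?thesis
    using assms(1) unfolding crossing_group.three_cycle_def by simp
qed

lemma three_cycle_1_2_3:
  assumes "even n" and "4 \<le> n" and "3 * n - 2 \<le> M"
  shows "crossing_group.three_cycle 1 2 3"
proof -
  obtain m where m: "n = 2 * m"
    using assms(1) by blast
  let ?g = "crossing n 3 \<circ> crossing n (m + 3) \<circ> crossing n 2 \<circ> crossing n (m + 2)"
  have "?g \<in> compositions (crossings n M)"
    using assms m by (intro compositions_comp crossing_in_compositions) auto
  moreover have "crossing_group.three_cycle 1 n (n + 2)"
    by (rule three_cycle_1_n_n_plus_2) (use assms in auto)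
  ultimately have "crossing_group.three_cycle (?g 1) (?g n) (?g (n + 2))"
    by (rule crossing_group.three_cycle_conjugate)
  moreover have "?g 1 = 1" and "?g n = 3" and "?g (n + 2) = 2"
    using assms(2) m by (auto simp: crossing_def)
  ultimately have "crossing_group.three_cycle 1 3 2"
    by simp
  then show ?thesis
    by (rule crossing_group.three_cycle_swap)
qed

lemma consecutive_three_cycle_middle:
  assumes "n = 2 * m" and "2 \<le> m" and "3 * n - 2 \<le> M" and "m - 1 \<le> i" and "i \<le> M - m"
  shows "crossing_group.three_cycle i (i + 1) (i + 2)"
proof -
  define P where "P i \<longleftrightarrow> crossing_group.three_cycle i (i + 1) (i + 2)" for i
  have "crossing_group.three_cycle 1 2 3"
    by (rule three_cycle_1_2_3) (use assms(1-3) in auto)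
  then have "P 1"
    unfolding P_def by (simp add: eval_nat_numeral)
  then have "P (2 * m - 2)"
    unfolding P_def by (rule reflect_consecutive_three_cycle[where k = 1]) (use assms in auto)
  moreover have "P i \<longleftrightarrow> P (Suc i)" if "m - 1 \<le> i" and "i < M - m" for i
    using reflect_consecutive_three_cycle[where i = i and j = "Suc i" and k = "i + 2 - m"]
      reflect_consecutive_three_cycle[where i = "Suc i" and j = i and k = "i + 2 - m"]
      that assms(1,2)
    unfolding P_def by auto
  then have "P (2 * m - 2) \<longleftrightarrow> P i"
    by (rule iff_Suc_imp_iff_on_interval) (use assms in auto)
  ultimately show ?thesis
    unfolding P_def by blast
qed

lemma consecutive_three_cycle_crossings:
  assumes "even n" and "2 \<le> n" and "3 * n - 2 \<le> M" and "1 \<le> i" and "i + 2 \<le> M"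
  shows "crossing_group.three_cycle i (i + 1) (i + 2)"
proof (cases "n = 2")
  case True
  then show ?thesis
    by (rule consecutive_three_cycle_adjacent_transpositions) (use assms in simp_all)
next
  case False
  obtain m where m: "n = 2 * m"
    using assms(1) by blast
  with assms(2) False have "2 \<le> m"
    by simp
  consider "i < m - 1" | "m - 1 \<le> i" "i \<le> M - m" | "M - m < i"
    by linarith
  then show ?thesis
  proof cases
    case 1
    let ?j = "n - 1 - i"
    have "crossing_group.three_cycle ?j (?j + 1) (?j + 2)"
      by (rule consecutive_three_cycle_middle[OF m \<open>2 \<le> m\<close> assms(3)]) (use 1 assms(3) m in auto)
    then show ?thesis
      by (rule reflect_consecutive_three_cycle[where k = 1]) (use 1 assms m in auto)
  next
    case 2
    then show ?thesis
      using consecutive_three_cycle_middle[OF m \<open>2 \<le> m\<close> assms(3)] by blast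
  next
    case 3
    let ?j = "2 * M - n - 1 - i"
    have "crossing_group.three_cycle ?j (?j + 1) (?j + 2)"
      by (rule consecutive_three_cycle_middle[OF m \<open>2 \<le> m\<close> assms(3)]) (use 3 assms m in auto)
    then show ?thesis
      by (rule reflect_consecutive_three_cycle[where k = "M - n + 1"]) (use 3 assms m in auto)
  qed
qed

lemma exists_crossing_composition_extending:
  assumes "even n" and "2 \<le> n" and "3 * n - 2 \<le> M" and "5 \<le> M"
    and "inj_on a {1..L}" and "a ` {1..L} \<subseteq> {1..M}" and "L + 2 \<le> M"
  shows "\<exists>g\<in>compositions (crossings n M). \<forall>k\<in>{1..L}. g k = a k"
proof (rule crossing_group.exists_composition_extending)
  show "crossing_group.three_cycle x y z" if "distinct [x, y, z]" and "{x, y, z} \<subseteq> {1..M}" for x y z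
    by (rule crossing_group.three_cycle_in_interval[OF assms(4)
          consecutive_three_cycle_crossings[OF assms(1-3)]])
      (use that in auto)
qed (use assms in auto)

end

lemma exists_crossing_word:
  assumes "even n" and "2 \<le> n" and "3 * n - 2 \<le> M" and "5 \<le> M"
    and "inj_on a {1..L}" and "a ` {1..L} \<subseteq> {1..M}" and "L + 2 \<le> M"
  obtains js where "\<forall>j\<in>set js. 1 \<le> j \<and> j \<le> M - n + 1"
    and "bij (foldr (\<circ>) (map (crossing n) js) id)"
    and "\<forall>k\<in>{1..L}. foldr (\<circ>) (map (crossing n) js) id k = a k"
proof -
  have "n \<le> M"
    using assms(2,3) by linarith
  then obtain g where g: "g \<in> compositions (crossings n M)" "\<forall>k\<in>{1..L}. g k = a k"
    using exists_crossing_composition_extending assms by blast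
  then have "bij g"
    using involutions.compositions_inverse[OF involutions_crossings] by blast
  obtain fs where "fs \<in> lists (crossing n ` {1..M - n + 1})" and "g = foldr (\<circ>) fs id"
    using g(1) unfolding compositions_eq_foldr crossings_def by auto
  then obtain js where "js \<in> lists {1..M - n + 1}" and "g = foldr (\<circ>) (map (crossing n) js) id"
    unfolding lists_image by blast
  with g(2) \<open>bij g\<close> show thesis
    using that by auto
qed

lemma strict_mono_on_if_Suc_less:
  fixes f :: "nat \<Rightarrow> 'a::order"
  assumes "\<forall>i\<in>{m..<n}. f i < f (Suc i)"
  shows "strict_mono_on {m..n} f"
proof (rule strict_mono_onI)
  fix r s
  assume rs: "r \<in> {m..n}" "s \<in> {m..n}" "r < s"
  show "f r < f s"
    by (rule lift_Suc_mono_less_ivl[of "{m..<n}"]) (use assms rs in auto)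
qed

lemma cyc_next_in_range:
  assumes "strict_mono_on {1..t} l" and "1 \<le> t" and "k \<in> {1..l t}"
  shows "cyc_next l t k \<in> {1..l t}"
proof (cases "k \<in> l ` {1..t}")
  case True
  then obtain i where i: "i \<in> {1..t}" "l i = k"
    by auto
  have "(THE i. i \<in> {1..t} \<and> l i = k) = i"
    using i strict_mono_on_eqD[OF assms(1)] by blast
  moreover have "l (i - 1) < l i" if "i \<noteq> 1"
    using i that by (intro strict_mono_onD[OF assms(1)]) auto
  ultimately show ?thesis
    using True i assms(3) unfolding cyc_next_def by (auto simp: Let_def)
next
  case False
  then have "k \<noteq> l t"
    using assms(2) by auto
  then show ?thesis
    using False assms(3) unfolding cyc_next_def by auto
qed

lemma cycles_perm_apply:
  assumes "inj_on a {1..l t}" and "k \<in> {1..l t}"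
  shows "cycles_perm l t a (a k) = a (cyc_next l t k)"
  using assms the_inv_into_f_f[OF assms] unfolding cycles_perm_def the_inv_into_def by auto

lemma cycles_perm_outside: "x \<notin> a ` {1..l t} \<Longrightarrow> cycles_perm l t a x = x"
  unfolding cycles_perm_def by auto

lemma cycles_perm_comp:
  assumes "bij g"
  shows "cycles_perm l t (g \<circ> f) = g \<circ> cycles_perm l t f \<circ> inv g"
proof
  fix y
  have "cycles_perm l t (g \<circ> f) (g x) = g (cycles_perm l t f x)" for x
    using bij_is_inj[OF assms] unfolding cycles_perm_def by (simp add: inj_eq)
  from this[of "inv g y"] show "cycles_perm l t (g \<circ> f) y = (g \<circ> cycles_perm l t f \<circ> inv g) y"
    using assms by (simp add: bij_is_surj surj_f_inv_f)
qed

lemma cycles_perm_cong: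
  assumes "\<And>k. k \<in> {1..l t} \<Longrightarrow> a k = b k" and "inj_on a {1..l t}"
    and "\<And>k. k \<in> {1..l t} \<Longrightarrow> cyc_next l t k \<in> {1..l t}"
  shows "cycles_perm l t a = cycles_perm l t b"
proof
  fix x
  have "inj_on b {1..l t}"
    using assms(1,2) inj_on_cong by blast
  show "cycles_perm l t a x = cycles_perm l t b x"
  proof (cases "x \<in> a ` {1..l t}")
    case True
    then obtain k where "k \<in> {1..l t}" and "x = a k"
      by blast
    then show ?thesis
      using cycles_perm_apply[where l = l and t = t, OF assms(2)]
        cycles_perm_apply[where l = l and t = t, OF \<open>inj_on b {1..l t}\<close>] assms(1,3)
      by simp
  next
    case False
    then have "x \<notin> b ` {1..l t}"
      using assms(1) by auto
    with False show ?thesis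
      by (simp add: cycles_perm_outside)
  qed
qed

lemma cycles_perm_eq_id:
  assumes "\<And>k. k \<in> {1..l t} \<Longrightarrow> cyc_next l t k = k" and "inj_on a {1..l t}"
  shows "cycles_perm l t a = id"
proof
  fix x
  show "cycles_perm l t a x = id x"
    using cycles_perm_apply[where l = l and t = t, OF assms(2)] cycles_perm_outside[of x a] assms(1)
    by (cases "x \<in> a ` {1..l t}") auto
qed

lemma cycles_perm_conjugate:
  assumes "bij g" and "\<forall>k\<in>{1..l t}. g k = a k" and "inj_on a {1..l t}"
    and "\<And>k. k \<in> {1..l t} \<Longrightarrow> cyc_next l t k \<in> {1..l t}"
  shows "cycles_perm l t a = g \<circ> cycles_perm l t id \<circ> inv g"
proof -
  have "cycles_perm l t a = cycles_perm l t (g \<circ> id)"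
    using assms(2-4) by (intro cycles_perm_cong) auto
  also have "\<dots> = g \<circ> cycles_perm l t id \<circ> inv g"
    by (rule cycles_perm_comp[OF assms(1)])
  finally show ?thesis .
qed

theorem lemma2p5:
  fixes n t :: nat and l a :: "nat \<Rightarrow> nat"
  assumes "n \<ge> 2" and "even n" and "t \<ge> 1"
    and "0 < l 1" and "\<forall>i\<in>{1..<t}. l i < l (Suc i)"
    and "1 \<le> a 1" and "\<forall>k\<in>{1..<l t}. a k < a (Suc k)"
    and "a (l t) \<le> l t + 3 * n - 3"
  shows "\<exists>js. (\<forall>j\<in>set js. 1 \<le> j \<and> j \<le> (l t + 3 * n - 3) - n + 1) \<and>
           (let g = foldr (\<circ>) (map (crossing n) js) id
            in cycles_perm l t a = g \<circ> cycles_perm l t id \<circ> inv g)"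
proof -
  define L M where "L = l t" and "M = L + 3 * n - 3"
  have l_mono: "strict_mono_on {1..t} l" and a_mono: "strict_mono_on {1..L} a"
    using assms(5,7) unfolding L_def by (auto intro: strict_mono_on_if_Suc_less)
  then have inj_a: "inj_on a {1..L}" and "1 \<le> L"
    using assms(3,4) strict_mono_on_leD[OF l_mono, of 1 t] unfolding L_def
    by (auto intro: strict_mono_on_imp_inj_on)
  have cyc: "cyc_next l t k \<in> {1..L}" if "k \<in> {1..L}" for k
    using cyc_next_in_range[OF l_mono assms(3)] that unfolding L_def by blast
  show ?thesis
  proof (cases "L = 1")
    case True
    \<comment> \<open>Both sides are the identity. For n = 2 there are then only four points, too few for
      the 3-cycle argument.\<close>
    then have "cycles_perm l t f = id" if "inj_on f {1..L}" for f
      using cyc that by (intro cycles_perm_eq_id) (auto simp: L_def)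
    then show ?thesis
      using inj_a by (intro exI[of _ "[]"]) simp
  next
    case False
    have "a ` {1..L} \<subseteq> {1..M}"
      using strict_mono_on_leD[OF a_mono, of 1] strict_mono_on_leD[OF a_mono, of _ L] \<open>1 \<le> L\<close>
        assms(6,8) unfolding L_def M_def by fastforce
    moreover have "3 * n - 2 \<le> M" and "5 \<le> M" and "L + 2 \<le> M"
      using assms(1) False \<open>1 \<le> L\<close> unfolding M_def by auto
    ultimately obtain js where "\<forall>j\<in>set js. 1 \<le> j \<and> j \<le> M - n + 1"
      and "bij (foldr (\<circ>) (map (crossing n) js) id)"
      and "\<forall>k\<in>{1..L}. foldr (\<circ>) (map (crossing n) js) id k = a k"
      using exists_crossing_word[OF assms(2,1) _ _ inj_a] by metis
    then show ?thesis
      using cycles_perm_conjugate inj_a cyc unfolding M_def L_def by (auto simp: Let_def)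
  qed
qed

end
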